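(* Let $C$ be a convex subset of the Euclidean plane $\mathbb{R}^2$ (not necessarily closed or bounded). Then for every finite point set $P \subset \mathbb{R}^2$, the straight-line drawing of $G_{t}(P,C)$ is a plane graph.
   Context: For a finite set $P \subset \mathbb{R}^2$ and a set $C \subseteq \mathbb{R}^2$, $G_{t}(P,C)$ is the graph with vertex set $P$ in which two distinct points $u,v \in P$ are adjacent if and only if there is a translate $C+\mathbf{v} = \{x+\mathbf{v} : x \in C\}$ (for some $\mathbf{v}\in\mathbb{R}^2$) with $P \cap (C+\mathbf{v}) = \{u,v\}$. The graph is drawn with each vertex at its point and each edge as the closed straight-line segment between its endpoints. A drawing is a plane graph if (1) no vertex lies on an edge of which it is not an endpoint, and (2) no two edges cross, i.e., two edges may intersect only at a common endpoint. *)

theory Defs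
  imports "HOL-Analysis.Analysis"
begin

definition translate_adj :: "(real \<times> real) set \<Rightarrow> (real \<times> real) set \<Rightarrow> real \<times> real \<Rightarrow> real \<times> real \<Rightarrow> bool" where
  "translate_adj P C u v \<longleftrightarrow>
     u \<in> P \<and> v \<in> P \<and> u \<noteq> v \<and> (\<exists>w. P \<inter> ((\<lambda>x. x + w) ` C) = {u, v})"

definition plane_straight_line :: "(real \<times> real) set \<Rightarrow> (real \<times> real \<Rightarrow> real \<times> real \<Rightarrow> bool) \<Rightarrow> bool" where
  "plane_straight_line P E \<longleftrightarrow>
     (\<forall>u v z. E u v \<and> z \<in> P \<and> z \<noteq> u \<and> z \<noteq> v \<longrightarrow> z \<notin> closed_segment u v) \<and>
     (\<forall>u v x y. E u v \<and> E x y \<and> {u, v} \<noteq> {x, y} \<longrightarrow>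
        closed_segment u v \<inter> closed_segment x y \<subseteq> {u, v} \<inter> {x, y})"

end

theory Submission
  imports Defs
begin

text \<open>Two translates \<open>K\<close> and \<open>K + t\<close> of a convex set behave like pseudo-disks: if
  \<open>u, v \<in> K\<close>, \<open>x, y \<in> K + t\<close> and the segments \<open>[u,v]\<close> and \<open>[x,y]\<close> meet, then \<open>x\<close> or \<open>y\<close>
  lies in \<open>K\<close>, or \<open>u\<close> or \<open>v\<close> lies in \<open>K + t\<close>. In the plane, \<open>t\<close> lies in the cone spanned by
  the directions from the crossing point to one endpoint of each segment, and then either \<open>y\<close> is a
  convex combination of \<open>y - t\<close>, \<open>u\<close>, \<open>v\<close>, or \<open>u - t\<close> is one of \<open>u\<close>, \<open>x - t\<close>, \<open>y - t\<close>.
  For two edges of \<open>G_t(P,C)\<close> with disjoint endpoints this contradicts the fact that the witnessing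
  translates contain exactly the endpoints of their edges; edges sharing an endpoint can only
  overlap if a third vertex lies on one of them, which convexity of the translate excludes.\<close>

lemma convex_scaled_combination3_mem:
  fixes a b c z :: "'a::real_vector"
  assumes z: "l1 *\<^sub>R a + l2 *\<^sub>R b + l3 *\<^sub>R c = (l1 + l2 + l3) *\<^sub>R z"
    and "convex K" "a \<in> K" "b \<in> K" "c \<in> K" "0 \<le> l1" "0 \<le> l2" "0 \<le> l3" and pos: "l1 + l2 + l3 > 0"
  shows "z \<in> K"
proof -
  define s where "s = l1 + l2 + l3"
  have "z = inverse s *\<^sub>R (l1 *\<^sub>R a + l2 *\<^sub>R b + l3 *\<^sub>R c)"
    using pos z unfolding s_def[symmetric] by simp
  then have "z = (l1 / s) *\<^sub>R a + (l2 / s) *\<^sub>R b + (l3 / s) *\<^sub>R c"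
    by (simp add: scaleR_add_right divide_inverse_commute)
  moreover have "convex hull {a, b, c} \<subseteq> K" using assms by (intro hull_minimal) auto
  moreover have "l1 / s + l2 / s + l3 / s = 1" using pos unfolding s_def by (simp add: add_divide_distrib[symmetric])
  ultimately show ?thesis unfolding convex_hull_3 using assms(6-8) pos unfolding s_def by fastforce
qed

lemma convex_translate_cone:
  fixes p U X t :: "'a::real_vector"
  assumes K: "convex K"
    and u: "p + U \<in> K" and v: "p - c *\<^sub>R U \<in> K" and x: "p + X - t \<in> K" and y: "p - k *\<^sub>R X - t \<in> K"
    and c: "c > 0" and k: "k > 0" and a: "a \<ge> 0" and b: "b \<ge> 0" and t: "t = a *\<^sub>R X + b *\<^sub>R U"
  shows "p - k *\<^sub>R X \<in> K \<or> p + U - t \<in> K"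
proof (cases "k * b \<le> a")
  case True
  have "(k * (1 + c)) *\<^sub>R (p - k *\<^sub>R X - t) + (a * c + k * b) *\<^sub>R (p + U) + (a - k * b) *\<^sub>R (p - c *\<^sub>R U)
      = ((k + a) * (1 + c)) *\<^sub>R p - (k * ((k + a) * (1 + c))) *\<^sub>R X"
    unfolding t by (simp add: algebra_simps)
  also have "\<dots> = (k * (1 + c) + (a * c + k * b) + (a - k * b)) *\<^sub>R (p - k *\<^sub>R X)"
    by (simp add: algebra_simps)
  finally have "p - k *\<^sub>R X \<in> K"
    by (rule convex_scaled_combination3_mem[OF _ K y u v])
      (use True a b c k in \<open>auto intro: add_pos_nonneg\<close>)
  then show ?thesis ..
next
  case False
  have "(1 + k) *\<^sub>R (p + U) + (b * k - a) *\<^sub>R (p + X - t) + (a + b) *\<^sub>R (p - k *\<^sub>R X - t)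
      = ((1 + b) * (1 + k)) *\<^sub>R p - (a * ((1 + b) * (1 + k))) *\<^sub>R X + ((1 - b) * ((1 + b) * (1 + k))) *\<^sub>R U"
    unfolding t by (simp add: algebra_simps)
  also have "\<dots> = ((1 + k) + (b * k - a) + (a + b)) *\<^sub>R (p + U - t)"
    unfolding t by (simp add: algebra_simps)
  finally have "p + U - t \<in> K"
    by (rule convex_scaled_combination3_mem[OF _ K u x y])
      (use False a b k in \<open>auto simp: mult.commute\<close>)
  then show ?thesis ..
qed

lemma open_segment_opposite:
  fixes u v p :: "'a::real_vector"
  assumes "p \<in> open_segment u v"
  obtains c where "c > 0" "v - p = - c *\<^sub>R (u - p)"
proof -
  obtain l where l: "0 < l" "l < 1" "p = (1 - l) *\<^sub>R u + l *\<^sub>R v"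
    using assms by (auto simp: in_segment)
  have "u - p = l *\<^sub>R (u - v)" "v - p = (1 - l) *\<^sub>R (v - u)"
    using l(3) by (simp_all add: algebra_simps)
  moreover have "- ((1 - l) / l) *\<^sub>R (l *\<^sub>R (u - v)) = (1 - l) *\<^sub>R (v - u)"
  proof -
    have "(1 - l) / l * l = 1 - l" using l(1) by simp
    then show ?thesis by (metis minus_diff_eq scaleR_minus_left scaleR_minus_right scaleR_scaleR)
  qed
  ultimately have "v - p = - ((1 - l) / l) *\<^sub>R (u - p)" by simp
  moreover have "(1 - l) / l > 0" using l by simp
  ultimately show ?thesis using that by blast
qed

lemma open_segment_scaleR_nonneg_side:
  fixes u v p :: "'a::real_vector"
  assumes "p \<in> open_segment u v"
  obtains u' v' s where "{u', v'} = {u, v}" "s \<ge> 0" "r *\<^sub>R (u - p) = s *\<^sub>R (u' - p)"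
proof (cases "r \<ge> 0")
  case True
  then show ?thesis using that by blast
next
  case False
  obtain c where "c > 0" "v - p = - c *\<^sub>R (u - p)" using open_segment_opposite[OF assms] .
  then have "r *\<^sub>R (u - p) = (- r / c) *\<^sub>R (v - p)" by simp
  moreover have "- r / c \<ge> 0" using False \<open>c > 0\<close> by (simp add: divide_nonpos_pos)
  ultimately show ?thesis using that[of v u] by blast
qed

lemma convex_translate_crossing_cone:
  fixes u v x y p t :: "'a::real_vector"
  assumes K: "convex K" and "u \<in> K" "v \<in> K" "x - t \<in> K" "y - t \<in> K"
    and uv: "p \<in> open_segment u v" and xy: "p \<in> open_segment x y"
    and "a \<ge> 0" "b \<ge> 0" and t: "t = a *\<^sub>R (x - p) + b *\<^sub>R (u - p)"
  shows "y \<in> K \<or> u - t \<in> K"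
proof -
  obtain c where "c > 0" and v: "v - p = - c *\<^sub>R (u - p)" using open_segment_opposite[OF uv] .
  obtain k where "k > 0" and y: "y - p = - k *\<^sub>R (x - p)" using open_segment_opposite[OF xy] .
  have "p + (u - p) = u" "p - c *\<^sub>R (u - p) = v" "p + (x - p) - t = x - t"
    "p - k *\<^sub>R (x - p) - t = y - t" "p - k *\<^sub>R (x - p) = y" "p + (u - p) - t = u - t"
    using v y by (auto simp: algebra_simps)
  then show ?thesis
    using convex_translate_cone[OF K, of p "u - p" c "x - p" t k a b] assms \<open>c > 0\<close> \<open>k > 0\<close> by auto
qed

lemma convex_translate_crossing_ray:
  fixes p u x t :: "'a::real_vector"
  assumes K: "convex K" and p: "p \<in> K" and pt: "p - t \<in> K" and u: "u \<in> K" and x: "x - t \<in> K"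
    and r: "r > 0" and ux: "x - p = r *\<^sub>R (u - p)"
  shows "x \<in> K \<or> u - t \<in> K"
proof (cases "r \<le> 1")
  case True
  have "x = (1 - r) *\<^sub>R p + r *\<^sub>R u" using ux by (simp add: algebra_simps)
  then have "x \<in> K" using convexD[OF K p u] True r by simp
  then show ?thesis ..
next
  case False
  have "(1 - 1 / r) *\<^sub>R (p - t) + (1 / r) *\<^sub>R (p + r *\<^sub>R (u - p) - t) = u - t"
    using r by (simp add: algebra_simps)
  moreover have "p + r *\<^sub>R (u - p) = x" using ux by (simp add: algebra_simps)
  ultimately have "u - t = (1 - 1 / r) *\<^sub>R (p - t) + (1 / r) *\<^sub>R (x - t)" by simp
  then have "u - t \<in> K" using convexD[OF K pt x] False r by simp
  then show ?thesis ..
qed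

lemma plane_combination_of_not_collinear:
  fixes X U t :: "'a::euclidean_space"
  assumes dim: "DIM('a) = 2" and nc: "\<not> collinear {0, X, U}"
  obtains a b where "t = a *\<^sub>R X + b *\<^sub>R U"
proof -
  have "X \<noteq> 0" and U: "U \<notin> span {X}" using nc by (auto simp: collinear_lemma span_singleton)
  then have "X \<noteq> U" using span_base by blast
  have "independent {X, U}"
    using U \<open>X \<noteq> 0\<close> by (simp add: independent_insert insert_commute)
  moreover have "card {X, U} = dim (UNIV :: 'a set)" using \<open>X \<noteq> U\<close> dim by simp
  ultimately have "t \<in> span {X, U}" using card_eq_dim[of "{X, U}" UNIV] by auto
  then obtain a b where "t - a *\<^sub>R X - b *\<^sub>R U = 0" by (auto simp: span_breakdown_eq)
  then show ?thesis using that by (simp add: algebra_simps)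
qed

lemma convex_translate_closed_segment_mem:
  fixes x y p t :: "'a::real_vector"
  assumes "convex K" "x - t \<in> K" "y - t \<in> K" "p \<in> closed_segment x y"
  shows "p - t \<in> K"
proof -
  have "-t + p \<in> closed_segment (-t + x) (-t + y)"
    using assms(4) by (simp only: closed_segment_translation_eq)
  then show ?thesis using closed_segment_subset[OF assms(2,3,1)] by (auto simp: algebra_simps)
qed

lemma convex_translate_crossing_open_segments:
  fixes u v x y p t :: "'a::euclidean_space"
  assumes dim: "DIM('a) = 2" and K: "convex K"
    and uvK: "u \<in> K" "v \<in> K" and xyK: "x - t \<in> K" "y - t \<in> K"
    and uv: "p \<in> open_segment u v" and xy: "p \<in> open_segment x y"
  shows "x \<in> K \<or> y \<in> K \<or> u - t \<in> K \<or> v - t \<in> K"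
proof (cases "collinear {0, u - p, x - p}")
  case False
  then obtain a b where t: "t = a *\<^sub>R (x - p) + b *\<^sub>R (u - p)"
    using plane_combination_of_not_collinear[OF dim] by (metis insert_commute)
  \<comment> \<open>Replacing a direction with negative coefficient by the opposite endpoint makes both
    coefficients nonnegative.\<close>
  obtain x' y' a' where x'y': "{x', y'} = {x, y}" "a' \<ge> 0" "a *\<^sub>R (x - p) = a' *\<^sub>R (x' - p)"
    using open_segment_scaleR_nonneg_side[OF xy] .
  obtain u' v' b' where u'v': "{u', v'} = {u, v}" "b' \<ge> 0" "b *\<^sub>R (u - p) = b' *\<^sub>R (u' - p)"
    using open_segment_scaleR_nonneg_side[OF uv] .
  have "p \<in> open_segment u' v'" "p \<in> open_segment x' y'"
    using uv xy x'y'(1) u'v'(1) by (auto simp: doubleton_eq_iff open_segment_commute)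
  moreover have "u' \<in> K" "v' \<in> K" "x' - t \<in> K" "y' - t \<in> K"
    using uvK xyK x'y'(1) u'v'(1) by (auto simp: doubleton_eq_iff)
  ultimately have "y' \<in> K \<or> u' - t \<in> K"
    using convex_translate_crossing_cone[OF K] x'y' u'v' t by metis
  then show ?thesis using x'y'(1) u'v'(1) by (auto simp: doubleton_eq_iff)
next
  case True
  have "u \<noteq> p" "x \<noteq> p" using uv xy by (auto simp: open_segment_def)
  then obtain r where r: "x - p = r *\<^sub>R (u - p)" using True by (auto simp: collinear_lemma)
  obtain u' v' s where u'v': "{u', v'} = {u, v}" "s \<ge> 0" "r *\<^sub>R (u - p) = s *\<^sub>R (u' - p)"
    using open_segment_scaleR_nonneg_side[OF uv] .
  have "s > 0" using u'v'(2,3) r \<open>x \<noteq> p\<close> by (cases "s = 0") auto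
  have "p \<in> closed_segment u v" "p \<in> closed_segment x y" using uv xy by (auto simp: open_segment_def)
  then have "p \<in> K" "p - t \<in> K"
    using closed_segment_subset[OF uvK K] convex_translate_closed_segment_mem[OF K xyK] by auto
  moreover have "u' \<in> K" using uvK u'v'(1) by (auto simp: doubleton_eq_iff)
  ultimately have "x \<in> K \<or> u' - t \<in> K"
    using convex_translate_crossing_ray[OF K _ _ _ xyK(1) \<open>s > 0\<close>] r u'v'(3) by metis
  then show ?thesis using u'v'(1) by (auto simp: doubleton_eq_iff)
qed

lemma convex_translate_crossing_segments:
  fixes u v x y p t :: "'a::euclidean_space"
  assumes dim: "DIM('a) = 2" and K: "convex K"
    and uvK: "u \<in> K" "v \<in> K" and xyK: "x - t \<in> K" "y - t \<in> K"
    and uv: "p \<in> closed_segment u v" and xy: "p \<in> closed_segment x y"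
  shows "x \<in> K \<or> y \<in> K \<or> u - t \<in> K \<or> v - t \<in> K"
proof (cases "p \<in> {u, v, x, y}")
  case True
  have "p \<in> K" "p - t \<in> K"
    using closed_segment_subset[OF uvK K] convex_translate_closed_segment_mem[OF K xyK] uv xy by auto
  then show ?thesis using True by auto
next
  case False
  then have "p \<in> open_segment u v" "p \<in> open_segment x y" using uv xy by (auto simp: open_segment_def)
  then show ?thesis using convex_translate_crossing_open_segments[OF dim K uvK xyK] by blast
qed

lemma closed_segment_Int_common_endpoint:
  fixes a b d :: "'a::euclidean_space"
  assumes "b \<notin> closed_segment a d" "d \<notin> closed_segment a b"
  shows "closed_segment a b \<inter> closed_segment a d = {a}"
proof -
  have "a \<in> closed_segment b d \<or> \<not> collinear {b, a, d}"
    using assms by (auto simp: collinear_between_cases between_mem_segment closed_segment_commute)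
  then show ?thesis using Int_closed_segment[of a b d] by (simp add: closed_segment_commute)
qed

lemma doubleton_Int_nonempty_cases:
  assumes "{u, v} \<inter> {x, y} \<noteq> {}" "{u, v} \<noteq> {x, y}"
  obtains a b d where "{u, v} = {a, b}" "{x, y} = {a, d}" "b \<noteq> d"
proof -
  from assms(1) consider "u = x" | "u = y" | "v = x" | "v = y" by blast
  then show thesis using assms(2) that by cases (metis insert_commute)+
qed

lemma mem_translation_right_iff: "z \<in> (\<lambda>x. x + w) ` C \<longleftrightarrow> z - w \<in> (C :: 'a::ab_group_add set)"
  by (auto simp: image_iff intro: bexI[of _ "z - w"])

lemma convex_translation_right: "convex C \<Longrightarrow> convex ((\<lambda>x. x + w) ` C)"
  using convex_translation[of C w] by (simp add: add.commute)

lemma translate_adj_doubleton: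
  assumes "translate_adj P C u v" "{u, v} = {a, b}"
  shows "translate_adj P C a b"
proof -
  have "u \<noteq> v" using assms(1) unfolding translate_adj_def by blast
  then have "a \<noteq> b" using assms(2) by (auto simp: doubleton_eq_iff)
  then show ?thesis using assms unfolding translate_adj_def by blast
qed

lemma translate_adj_no_vertex_on_edge:
  assumes "convex C" "translate_adj P C u v" "z \<in> P" "z \<noteq> u" "z \<noteq> v"
  shows "z \<notin> closed_segment u v"
proof
  assume z: "z \<in> closed_segment u v"
  obtain w where w: "P \<inter> (\<lambda>x. x + w) ` C = {u, v}" using assms(2) unfolding translate_adj_def by blast
  then have "u \<in> (\<lambda>x. x + w) ` C" "v \<in> (\<lambda>x. x + w) ` C" by auto
  then have "closed_segment u v \<subseteq> (\<lambda>x. x + w) ` C"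
    by (rule closed_segment_subset[OF _ _ convex_translation_right[OF assms(1)]])
  then have "z \<in> (\<lambda>x. x + w) ` C" using z by (rule subsetD)
  then have "z \<in> {u, v}" using w assms(3) by blast
  then show False using assms(4,5) by simp
qed

lemma translate_adj_edges_common_endpoint:
  assumes "convex C" "translate_adj P C a b" "translate_adj P C a d" "b \<noteq> d"
  shows "closed_segment a b \<inter> closed_segment a d = {a}"
proof (rule closed_segment_Int_common_endpoint)
  have "a \<noteq> b" "a \<noteq> d" "b \<in> P" "d \<in> P" using assms(2,3) unfolding translate_adj_def by auto
  then show "b \<notin> closed_segment a d" "d \<notin> closed_segment a b"
    using translate_adj_no_vertex_on_edge[OF assms(1,3), of b]
      translate_adj_no_vertex_on_edge[OF assms(1,2), of d] assms(4) by auto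
qed

lemma translate_adj_edges_disjoint:
  assumes C: "convex C" and uv: "translate_adj P C u v" and xy: "translate_adj P C x y"
    and disj: "{u, v} \<inter> {x, y} = {}"
  shows "closed_segment u v \<inter> closed_segment x y = {}"
proof -
  obtain w1 where w1: "P \<inter> (\<lambda>z. z + w1) ` C = {u, v}" using uv unfolding translate_adj_def by blast
  obtain w2 where w2: "P \<inter> (\<lambda>z. z + w2) ` C = {x, y}" using xy unfolding translate_adj_def by blast
  define K where "K = (\<lambda>z. z + w1) ` C"
  define t where "t = w2 - w1"
  have K: "convex K" unfolding K_def using convex_translation_right[OF C] .
  have shift: "z - t \<in> K \<longleftrightarrow> z \<in> (\<lambda>z. z + w2) ` C" for z
    unfolding K_def t_def mem_translation_right_iff by (simp add: algebra_simps)
  have inK: "z \<in> K \<longleftrightarrow> z \<in> {u, v}" if "z \<in> P" for z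
    using w1 that unfolding K_def by blast
  have inKt: "z - t \<in> K \<longleftrightarrow> z \<in> {x, y}" if "z \<in> P" for z
    using w2 shift that by blast
  have "u \<in> P" "v \<in> P" "x \<in> P" "y \<in> P" using uv xy unfolding translate_adj_def by blast+
  then have uvK: "u \<in> K" "v \<in> K" and xyK: "x - t \<in> K" "y - t \<in> K"
    and "x \<notin> K" "y \<notin> K" "u - t \<notin> K" "v - t \<notin> K"
    using inK inKt disj by blast+
  then show ?thesis
    using convex_translate_crossing_segments[OF _ K uvK xyK] by fastforce
qed

theorem mainTheorem1:
  fixes C P :: "(real \<times> real) set"
  assumes "convex C" and "finite P"
  shows "plane_straight_line P (translate_adj P C)"
  unfolding plane_straight_line_def
proof (intro conjI allI impI)
  fix u v z assume "translate_adj P C u v \<and> z \<in> P \<and> z \<noteq> u \<and> z \<noteq> v"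
  then show "z \<notin> closed_segment u v" using translate_adj_no_vertex_on_edge[OF assms(1)] by blast
next
  fix u v x y
  assume "translate_adj P C u v \<and> translate_adj P C x y \<and> {u, v} \<noteq> {x, y}"
  then have uv: "translate_adj P C u v" and xy: "translate_adj P C x y" and ne: "{u, v} \<noteq> {x, y}"
    by auto
  show "closed_segment u v \<inter> closed_segment x y \<subseteq> {u, v} \<inter> {x, y}"
  proof (cases "{u, v} \<inter> {x, y} = {}")
    case True
    then show ?thesis using translate_adj_edges_disjoint[OF assms(1) uv xy] by simp
  next
    case False
    then obtain a b d where ab: "{u, v} = {a, b}" and ad: "{x, y} = {a, d}" and "b \<noteq> d"
      using ne by (rule doubleton_Int_nonempty_cases)
    then have "translate_adj P C a b" "translate_adj P C a d"
      using translate_adj_doubleton uv xy by blast+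
    then have "closed_segment a b \<inter> closed_segment a d = {a}"
      using translate_adj_edges_common_endpoint[OF assms(1)] \<open>b \<noteq> d\<close> by blast
    moreover have "closed_segment u v = closed_segment a b" "closed_segment x y = closed_segment a d"
      using ab ad by (auto simp: doubleton_eq_iff closed_segment_commute)
    ultimately have "closed_segment u v \<inter> closed_segment x y = {a}" by metis
    then show ?thesis by (simp add: ab ad)
  qed
qed

end
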